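(* Let $G$ be a signed digraph on vertex set $\{1,\dots,n\}$ and let $H$ be a spanning subgraph of $G$ such that (i) $G$ has no arc from a sink of $H$ to a source of $H$, and (ii) $G$ has no arc (from any vertex) to a vertex that is isolated in $H$. Let $A$ be the set of sources of $H$ that are not sources of $G$, and $B$ the set of sinks of $H$ that are not sinks of $G$. Let $h:Y\to Y$ be a degree-bounded finite dynamical system on $H$ and let $\xi\in Y$. Then there exists a degree-bounded finite dynamical system $f:X\to X$ on $G$, with $Y\subseteq X$, such that: (1) $f(X)\subseteq Y$; (2) $f_i(X)\subseteq h_i(Y)$ for all $i\notin A$; (3) $f(x)=h(x)$ for all $x\in Y$ with $x_i=\xi_i$ for all $i\in B$; (4) $f_i(x)=h_i(x)$ for all $x\in Y$ and all vertices $i$ with $G_i\cap B=\emptyset$.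
   Context: A finite dynamical system (FDS) with $n$ components is a map $f=(f_1,\dots,f_n):X\to X$ where $X=X_1\times\cdots\times X_n$ and each $X_i$ is a nonempty finite interval of integers. A signed digraph is a pair $G=(V,E)$ with $E\subseteq V\times V\times\{+,-\}$; $(j,i,s)\in E$ is an arc from $j$ to $i$ of sign $s$ (loops allowed; $G$ may have both a positive and a negative arc from $j$ to $i$). $G_i$ denotes the set of $j$ having an arc to $i$ in $G$. In-degree $d^{\mathrm{in}}_G(i)$ and out-degree $d^{\mathrm{out}}_G(i)$ count arcs entering/leaving $i$, positive and negative arcs counted separately. A source has in-degree $0$, a sink out-degree $0$, an isolated vertex both. A spanning subgraph has the same vertex set and a subset of the arcs. The interaction graph of an FDS $f$ is the signed digraph on $\{1,\dots,n\}$ with a positive (resp. negative) arc from $j$ to $i$ iff there is $x\in X$ with $x_j<\max(X_j)$ and $f_i(x+e_j)-f_i(x)$ positive (resp. negative), $e_j$ the $j$-th unit vector; $f$ is an FDS on $G$ if $G$ is its interaction graph. $f$ is degree-bounded if, with $G$ its interaction graph, for every $i$: $|X_i|=2$ if $d^{\mathrm{out}}_G(i)=0<d^{\mathrm{in}}_G(i)$, and $|X_i|\le d^{\mathrm{out}}_G(i)+1$ otherwise. *)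

theory Defs
  imports Main
begin

datatype sign = Pos | Neg

type_synonym sdigraph = "(nat \<times> nat \<times> sign) set"

text \<open>States are functions nat => int; components 1..n are meaningful,
  all other components are fixed to 0.\<close>

definition box :: "nat \<Rightarrow> (nat \<Rightarrow> int) \<Rightarrow> (nat \<Rightarrow> int) \<Rightarrow> (nat \<Rightarrow> int) set" where
  "box n a b = {x. \<forall>i. (i \<in> {1..n} \<longrightarrow> a i \<le> x i \<and> x i \<le> b i) \<and> (i \<notin> {1..n} \<longrightarrow> x i = 0)}"

definition state_space :: "nat \<Rightarrow> (nat \<Rightarrow> int) set \<Rightarrow> bool" where
  "state_space n X \<longleftrightarrow> (\<exists>a b. (\<forall>i\<in>{1..n}. a i \<le> b i) \<and> X = box n a b)"

definition comp :: "(nat \<Rightarrow> int) set \<Rightarrow> nat \<Rightarrow> int set" where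
  "comp X i = (\<lambda>x. x i) ` X"

definition interaction_graph :: "nat \<Rightarrow> (nat \<Rightarrow> int) set \<Rightarrow> ((nat \<Rightarrow> int) \<Rightarrow> (nat \<Rightarrow> int)) \<Rightarrow> sdigraph" where
  "interaction_graph n X f = {(j, i, s). j \<in> {1..n} \<and> i \<in> {1..n} \<and>
     (\<exists>x\<in>X. x j < Max (comp X j) \<and>
        (if s = Pos then f (x(j := x j + 1)) i - f x i > 0
                    else f (x(j := x j + 1)) i - f x i < 0))}"

definition is_sdigraph :: "nat \<Rightarrow> sdigraph \<Rightarrow> bool" where
  "is_sdigraph n G \<longleftrightarrow> G \<subseteq> {1..n} \<times> {1..n} \<times> UNIV"

definition indeg :: "sdigraph \<Rightarrow> nat \<Rightarrow> nat" where
  "indeg G i = card {(j, s). (j, i, s) \<in> G}"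

definition outdeg :: "sdigraph \<Rightarrow> nat \<Rightarrow> nat" where
  "outdeg G i = card {(k, s). (i, k, s) \<in> G}"

definition in_nbrs :: "sdigraph \<Rightarrow> nat \<Rightarrow> nat set" where
  "in_nbrs G i = {j. \<exists>s. (j, i, s) \<in> G}"

definition is_source :: "sdigraph \<Rightarrow> nat \<Rightarrow> bool" where
  "is_source G i \<longleftrightarrow> indeg G i = 0"

definition is_sink :: "sdigraph \<Rightarrow> nat \<Rightarrow> bool" where
  "is_sink G i \<longleftrightarrow> outdeg G i = 0"

definition is_isolated :: "sdigraph \<Rightarrow> nat \<Rightarrow> bool" where
  "is_isolated G i \<longleftrightarrow> is_source G i \<and> is_sink G i"

definition fds_on :: "nat \<Rightarrow> (nat \<Rightarrow> int) set \<Rightarrow> ((nat \<Rightarrow> int) \<Rightarrow> (nat \<Rightarrow> int)) \<Rightarrow> sdigraph \<Rightarrow> bool" where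
  "fds_on n X f G \<longleftrightarrow> state_space n X \<and> (\<forall>x\<in>X. f x \<in> X) \<and> interaction_graph n X f = G"

definition degree_bounded :: "nat \<Rightarrow> (nat \<Rightarrow> int) set \<Rightarrow> ((nat \<Rightarrow> int) \<Rightarrow> (nat \<Rightarrow> int)) \<Rightarrow> bool" where
  "degree_bounded n X f \<longleftrightarrow> (\<forall>i\<in>{1..n}.
     (let G = interaction_graph n X f in
      if outdeg G i = 0 \<and> 0 < indeg G i then card (comp X i) = 2
      else card (comp X i) \<le> outdeg G i + 1))"

end

theory Submission
  imports Defs
begin

text \<open>
  The new system \<open>F\<close> follows \<open>h\<close> on the box \<open>Y\<close> (states of \<open>X\<close> are first projected onto \<open>Y\<close>),
  which reproduces the arcs of \<open>H\<close>. Each component \<open>j\<close> gets at most one extra value above and one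
  below its core interval (\<open>Y\<^sub>j\<close>, or just \<open>\<xi> j\<close> if \<open>j \<in> B\<close>), and every arc \<open>(j, k, s)\<close> of \<open>G - H\<close>
  is attached to one of them: when \<open>x\<^sub>j\<close> takes that extra value, \<open>F\<^sub>k\<close> is forced to the lowest or
  highest value allowed for it (the extremes of \<open>h\<^sub>k\<close>, or of \<open>Y\<^sub>k\<close> if \<open>k \<in> A\<close>), whichever gives the
  arc sign \<open>s\<close>. Hypothesis (ii) makes these two values distinct, so the arc really appears, and no
  other arc is created, because moving \<open>x\<^sub>j\<close> only switches forcings by arcs out of \<open>j\<close>. Extra values
  are paid for by new out-arcs, which keeps \<open>F\<close> degree-bounded. The sinks in \<open>B\<close> have \<open>|Y\<^sub>j| \<le> 2\<close> and
  do not influence \<open>h\<close>; by hypothesis (i) their new out-arcs end outside \<open>A\<close>, so both extremes of the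
  target are attained by \<open>h\<close>. On states of \<open>Y\<close> agreeing with \<open>\<xi>\<close> on \<open>B\<close> nothing is forced: \<open>F = h\<close>.
\<close>

lemma comp_box:
  assumes "\<forall>i\<in>{1..n}. a i \<le> b i" "i \<in> {1..n}"
  shows "comp (box n a b) i = {a i..b i}"
proof
  show "comp (box n a b) i \<subseteq> {a i..b i}"
    using assms(2) by (auto simp: comp_def box_def)
  show "{a i..b i} \<subseteq> comp (box n a b) i"
  proof
    fix v assume v: "v \<in> {a i..b i}"
    let ?x = "\<lambda>l. if l \<in> {1..n} then (if l = i then v else a l) else 0"
    have "?x \<in> box n a b" using assms v by (auto simp: box_def)
    then show "v \<in> comp (box n a b) i"
      unfolding comp_def using assms(2) by (intro image_eqI[where x = ?x]) simp_all
  qed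
qed

lemma Max_comp_box:
  assumes "\<forall>i\<in>{1..n}. a i \<le> b i" "i \<in> {1..n}"
  shows "Max (comp (box n a b) i) = b i"
  unfolding comp_box[OF assms] using assms by (intro Max_eqI) auto

lemma card_comp_box:
  assumes "\<forall>i\<in>{1..n}. a i \<le> b i" "i \<in> {1..n}"
  shows "card (comp (box n a b) i) = nat (b i - a i + 1)"
  unfolding comp_box[OF assms] by simp

lemma box_bounds: "x \<in> box n a b \<Longrightarrow> i \<in> {1..n} \<Longrightarrow> a i \<le> x i \<and> x i \<le> b i"
  by (auto simp: box_def)

lemma box_outside: "x \<in> box n a b \<Longrightarrow> i \<notin> {1..n} \<Longrightarrow> x i = 0"
  by (auto simp: box_def)

lemma box_update:
  "x \<in> box n a b \<Longrightarrow> i \<in> {1..n} \<Longrightarrow> a i \<le> v \<Longrightarrow> v \<le> b i \<Longrightarrow> x(i := v) \<in> box n a b"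
  by (auto simp: box_def)

lemma finite_out_arcs: "finite E \<Longrightarrow> finite {(k, s). (i, k, s) \<in> E}"
  by (rule finite_subset[of _ "snd ` E"]) force+

lemma outdeg_eq_0_iff: "finite E \<Longrightarrow> outdeg E i = 0 \<longleftrightarrow> (\<forall>k s. (i, k, s) \<notin> E)"
  unfolding outdeg_def using finite_out_arcs by fastforce

lemma indeg_eq_0_iff: "finite E \<Longrightarrow> indeg E i = 0 \<longleftrightarrow> (\<forall>j s. (j, i, s) \<notin> E)"
proof -
  assume E: "finite E"
  have "{(j, s). (j, i, s) \<in> E} \<subseteq> (\<lambda>(j, k, s). (j, s)) ` E" by force
  then have "finite {(j, s). (j, i, s) \<in> E}" using E finite_surj by blast
  then show ?thesis unfolding indeg_def by auto
qed

lemma finite_UNIV_sign: "finite (UNIV :: sign set)"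
proof -
  have "(UNIV :: sign set) = {Pos, Neg}" using sign.exhaust by auto
  then show ?thesis by (metis finite.emptyI finite.insertI)
qed

lemma is_sdigraph_finite: "is_sdigraph n G \<Longrightarrow> finite G"
  unfolding is_sdigraph_def using finite_UNIV_sign by (auto intro: finite_subset)

lemma interaction_graph_sdigraph: "is_sdigraph n (interaction_graph n X f)"
  by (auto simp: is_sdigraph_def interaction_graph_def)

lemma interaction_graph_box_iff:
  assumes "\<forall>i\<in>{1..n}. a i \<le> b i"
  shows "(j, k, s) \<in> interaction_graph n (box n a b) f \<longleftrightarrow> j \<in> {1..n} \<and> k \<in> {1..n} \<and>
    (\<exists>x\<in>box n a b. x j < b j \<and>
       (if s = Pos then f x k < f (x(j := x j + 1)) k else f (x(j := x j + 1)) k < f x k))"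
  unfolding interaction_graph_def using Max_comp_box[OF assms] by auto

lemma int_interval_antimono:
  fixes g :: "int \<Rightarrow> 'a :: preorder"
  assumes "\<And>v. u \<le> v \<Longrightarrow> v < w \<Longrightarrow> g (v + 1) \<le> g v" and "u \<le> w"
  shows "g w \<le> g u"
proof -
  have "v \<le> w \<longrightarrow> g v \<le> g u" if "u \<le> v" for v
    using that
  proof (induction v rule: int_ge_induct)
    case (step v)
    then show ?case using assms(1)[of v] order_trans by fastforce
  qed simp
  then show ?thesis using \<open>u \<le> w\<close> by blast
qed

lemma interaction_graph_no_Pos_antimono:
  assumes ab: "\<forall>i\<in>{1..n}. a i \<le> b i" and no_arc: "(j, k, Pos) \<notin> interaction_graph n (box n a b) f"
    and "j \<in> {1..n}" "k \<in> {1..n}" "y \<in> box n a b" "a j \<le> u" "u \<le> w" "w \<le> b j"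
  shows "f (y(j := w)) k \<le> f (y(j := u)) k"
proof (rule int_interval_antimono[where g = "\<lambda>v. f (y(j := v)) k"])
  fix v assume "u \<le> v" "v < w"
  then have "y(j := v) \<in> box n a b" using assms by (intro box_update) auto
  then show "f (y(j := v + 1)) k \<le> f (y(j := v)) k"
    using no_arc assms \<open>v < w\<close> unfolding interaction_graph_box_iff[OF ab] by force
qed (fact \<open>u \<le> w\<close>)

lemma interaction_graph_no_Neg_mono:
  assumes ab: "\<forall>i\<in>{1..n}. a i \<le> b i" and no_arc: "(j, k, Neg) \<notin> interaction_graph n (box n a b) f"
    and "j \<in> {1..n}" "k \<in> {1..n}" "y \<in> box n a b" "a j \<le> u" "u \<le> w" "w \<le> b j"
  shows "f (y(j := u)) k \<le> f (y(j := w)) k"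
proof -
  have "- f (y(j := w)) k \<le> - f (y(j := u)) k"
  proof (rule int_interval_antimono[where g = "\<lambda>v. - f (y(j := v)) k"])
    fix v assume "u \<le> v" "v < w"
    then have "y(j := v) \<in> box n a b" using assms by (intro box_update) auto
    then show "- f (y(j := v + 1)) k \<le> - f (y(j := v)) k"
      using no_arc assms \<open>v < w\<close> unfolding interaction_graph_box_iff[OF ab] by force
  qed (fact \<open>u \<le> w\<close>)
  then show ?thesis by simp
qed

lemma interaction_graph_no_arc_const:
  assumes ab: "\<forall>i\<in>{1..n}. a i \<le> b i"
    and "(j, k, Pos) \<notin> interaction_graph n (box n a b) f" "(j, k, Neg) \<notin> interaction_graph n (box n a b) f"
    and "j \<in> {1..n}" "k \<in> {1..n}" "y \<in> box n a b"
    and "a j \<le> u" "u \<le> b j" "a j \<le> w" "w \<le> b j"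
  shows "f (y(j := u)) k = f (y(j := w)) k"
  using interaction_graph_no_Pos_antimono[OF ab assms(2,4-6)]
    interaction_graph_no_Neg_mono[OF ab assms(3-6)] assms(7-)
  by (metis nle_le order_antisym)

lemma interaction_graph_sink_update:
  assumes ab: "\<forall>i\<in>{1..n}. a i \<le> b i" and maps: "\<forall>x\<in>box n a b. f x \<in> box n a b"
    and sink: "is_sink (interaction_graph n (box n a b) f) j"
    and "j \<in> {1..n}" "y \<in> box n a b" "a j \<le> v" "v \<le> b j"
  shows "f (y(j := v)) = f y"
proof
  fix k
  have no_arc: "(j, k, s) \<notin> interaction_graph n (box n a b) f" for s
    using sink is_sdigraph_finite[OF interaction_graph_sdigraph] outdeg_eq_0_iff
    unfolding is_sink_def by blast
  show "f (y(j := v)) k = f y k"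
  proof (cases "k \<in> {1..n}")
    case True
    then show ?thesis
      using interaction_graph_no_arc_const[OF ab no_arc no_arc \<open>j \<in> {1..n}\<close> True \<open>y \<in> box n a b\<close>,
          of v "y j"] assms box_bounds by fastforce
  next
    case False
    then show ?thesis using maps assms box_update box_outside by metis
  qed
qed

lemma forced_choice_mono:
  fixes lo hi v v' :: "'a :: order"
  assumes "m \<Longrightarrow> m'" "M' \<Longrightarrow> M" "lo \<le> v'" "v' \<le> v" "v \<le> hi"
  shows "(if m' then lo else if M' then hi else v') \<le> (if m then lo else if M then hi else v)"
  using assms order_trans by auto

lemma indicator_le_card: "finite S \<Longrightarrow> (if S = {} then 0 else 1) \<le> card S"
  by (auto simp: card_gt_0_iff Suc_le_eq)

locale fds_extension =
  fixes n :: nat and G H :: sdigraph and Y :: "(nat \<Rightarrow> int) set"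
    and h :: "(nat \<Rightarrow> int) \<Rightarrow> (nat \<Rightarrow> int)" and \<xi> a b :: "nat \<Rightarrow> int"
  assumes G_sdigraph: "is_sdigraph n G" and H_sub_G: "H \<subseteq> G"
    and no_sink_source_arc: "\<forall>(j, i, s)\<in>G. \<not> (is_sink H j \<and> is_source H i)"
    and no_arc_to_isolated: "\<forall>(j, i, s)\<in>G. \<not> is_isolated H i"
    and Y_box: "Y = box n a b" and a_le_b: "\<forall>i\<in>{1..n}. a i \<le> b i"
    and h_maps: "\<forall>x\<in>Y. h x \<in> Y" and H_eq: "interaction_graph n Y h = H"
    and h_degree_bounded: "degree_bounded n Y h" and \<xi>_in_Y: "\<xi> \<in> Y"
begin

lemma G_finite: "finite G"
  using G_sdigraph by (rule is_sdigraph_finite)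

lemma H_finite: "finite H"
  using G_finite H_sub_G by (rule finite_subset[rotated])

lemma G_arc_range: "(j, k, s) \<in> G \<Longrightarrow> j \<in> {1..n} \<and> k \<in> {1..n}"
  using G_sdigraph by (auto simp: is_sdigraph_def)

lemma H_box: "interaction_graph n (box n a b) h = H"
  using H_eq Y_box by simp

lemma H_iff: "(j, k, s) \<in> H \<longleftrightarrow> j \<in> {1..n} \<and> k \<in> {1..n} \<and>
    (\<exists>x\<in>Y. x j < b j \<and>
       (if s = Pos then h x k < h (x(j := x j + 1)) k else h (x(j := x j + 1)) k < h x k))"
  using interaction_graph_box_iff[OF a_le_b, of j k s h] by (simp add: H_box Y_box)

lemmas h_no_Pos_antimono =
  interaction_graph_no_Pos_antimono[OF a_le_b, of _ _ h, unfolded H_box, folded Y_box]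
lemmas h_no_Neg_mono =
  interaction_graph_no_Neg_mono[OF a_le_b, of _ _ h, unfolded H_box, folded Y_box]
lemmas h_no_arc_const =
  interaction_graph_no_arc_const[OF a_le_b, of _ _ h, unfolded H_box, folded Y_box]

lemma Y_bounds: "x \<in> Y \<Longrightarrow> i \<in> {1..n} \<Longrightarrow> a i \<le> x i \<and> x i \<le> b i"
  using box_bounds Y_box by blast

lemma Y_outside: "x \<in> Y \<Longrightarrow> i \<notin> {1..n} \<Longrightarrow> x i = 0"
  using box_outside Y_box by blast

lemma Y_update: "x \<in> Y \<Longrightarrow> i \<in> {1..n} \<Longrightarrow> a i \<le> v \<Longrightarrow> v \<le> b i \<Longrightarrow> x(i := v) \<in> Y"
  using box_update Y_box by blast

lemma h_bounds: "x \<in> Y \<Longrightarrow> k \<in> {1..n} \<Longrightarrow> a k \<le> h x k \<and> h x k \<le> b k"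
  using h_maps Y_bounds by blast

lemma h_outside: "x \<in> Y \<Longrightarrow> k \<notin> {1..n} \<Longrightarrow> h x k = 0"
  using h_maps Y_outside by blast

lemma H_sink_no_arc: "is_sink H j \<Longrightarrow> (j, k, s) \<notin> H"
  using outdeg_eq_0_iff[OF H_finite] unfolding is_sink_def by blast

lemma h_sink_update:
  "is_sink H j \<Longrightarrow> j \<in> {1..n} \<Longrightarrow> y \<in> Y \<Longrightarrow> a j \<le> v \<Longrightarrow> v \<le> b j \<Longrightarrow> h (y(j := v)) = h y"
  using interaction_graph_sink_update[OF a_le_b, of h j y v] h_maps
  by (simp add: H_box Y_box)

lemma Y_degree_bound:
  "i \<in> {1..n} \<Longrightarrow> (if outdeg H i = 0 \<and> 0 < indeg H i then card (comp Y i) = 2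
     else card (comp Y i) \<le> outdeg H i + 1)"
  using h_degree_bounded unfolding degree_bounded_def Let_def H_eq by blast

definition A :: "nat set" where
  "A = {i\<in>{1..n}. is_source H i \<and> \<not> is_source G i}"
definition B :: "nat set" where
  "B = {i\<in>{1..n}. is_sink H i \<and> \<not> is_sink G i}"
definition new_arcs :: "sdigraph" where
  "new_arcs = G - H"
definition vmin :: "nat \<Rightarrow> int" where
  "vmin k = (if k \<in> A then a k else Min ((\<lambda>y. h y k) ` Y))"
definition vmax :: "nat \<Rightarrow> int" where
  "vmax k = (if k \<in> A then b k else Max ((\<lambda>y. h y k) ` Y))"
definition core_lo :: "nat \<Rightarrow> int" where
  "core_lo j = (if j \<in> B then \<xi> j else a j)"
definition core_hi :: "nat \<Rightarrow> int" where
  "core_hi j = (if j \<in> B then \<xi> j else b j)"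

text \<open>For \<open>j \<in> B\<close> the sides are chosen so that the extended interval still covers \<open>Y\<^sub>j\<close> (which
  has at most two elements) and arcs of opposite sign never share a side; for \<open>j \<notin> B\<close> so
  that leaving \<open>Y\<^sub>j\<close> on that side can move \<open>h\<^sub>k\<close> to the forced value in direction \<open>s\<close>.\<close>
definition attached_above :: "nat \<Rightarrow> nat \<Rightarrow> sign \<Rightarrow> bool" where
  "attached_above j k s = (if j \<in> B then
    (if s = Pos then \<xi> j \<le> a j \<or> (\<exists>k'. (j, k', Neg) \<in> new_arcs)
     else \<xi> j \<le> a j \<and> \<not> (\<exists>k'. (j, k', Pos) \<in> new_arcs))
  else (if s = Pos then \<exists>y\<in>Y. y j = b j \<and> h y k < vmax k
        else \<not> (\<exists>y\<in>Y. y j = a j \<and> h y k < vmax k)))"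

definition arcs_above :: "nat \<Rightarrow> (nat \<times> sign) set" where
  "arcs_above j = {(k, s). (j, k, s) \<in> new_arcs \<and> attached_above j k s}"
definition arcs_below :: "nat \<Rightarrow> (nat \<times> sign) set" where
  "arcs_below j = {(k, s). (j, k, s) \<in> new_arcs \<and> \<not> attached_above j k s}"
definition a' :: "nat \<Rightarrow> int" where
  "a' j = core_lo j - (if arcs_below j = {} then 0 else 1)"
definition b' :: "nat \<Rightarrow> int" where
  "b' j = core_hi j + (if arcs_above j = {} then 0 else 1)"
definition X :: "(nat \<Rightarrow> int) set" where
  "X = box n a' b'"

definition active :: "(nat \<Rightarrow> int) \<Rightarrow> nat \<Rightarrow> nat \<Rightarrow> sign \<Rightarrow> bool" where
  "active x j k s \<longleftrightarrow>
    (j, k, s) \<in> new_arcs \<and> (if attached_above j k s then core_hi j < x j else x j < core_lo j)"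
definition raises :: "nat \<Rightarrow> nat \<Rightarrow> sign \<Rightarrow> bool" where
  "raises j k s \<longleftrightarrow> (attached_above j k s \<longleftrightarrow> s = Pos)"
definition forced_min :: "(nat \<Rightarrow> int) \<Rightarrow> nat \<Rightarrow> bool" where
  "forced_min x k \<longleftrightarrow> (\<exists>j s. active x j k s \<and> \<not> raises j k s)"
definition forced_max :: "(nat \<Rightarrow> int) \<Rightarrow> nat \<Rightarrow> bool" where
  "forced_max x k \<longleftrightarrow> (\<exists>j s. active x j k s \<and> raises j k s)"
definition clamp :: "(nat \<Rightarrow> int) \<Rightarrow> nat \<Rightarrow> int" where
  "clamp x = (\<lambda>i. if i \<in> {1..n} then max (a i) (min (b i) (x i)) else 0)"
definition F :: "(nat \<Rightarrow> int) \<Rightarrow> nat \<Rightarrow> int" where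
  "F x = (\<lambda>k. if k \<in> {1..n} then
    (if forced_min x k then vmin k else if forced_max x k then vmax k else h (clamp x) k) else 0)"

lemma new_arc_G: "(j, k, s) \<in> new_arcs \<Longrightarrow> (j, k, s) \<in> G"
  by (simp add: new_arcs_def)

lemma new_arc_not_H: "(j, k, s) \<in> new_arcs \<Longrightarrow> (j, k, s) \<notin> H"
  by (simp add: new_arcs_def)

lemma new_arc_range: "(j, k, s) \<in> new_arcs \<Longrightarrow> j \<in> {1..n} \<and> k \<in> {1..n}"
  using new_arc_G G_arc_range by blast

lemma B_range: "j \<in> B \<Longrightarrow> j \<in> {1..n}"
  by (simp add: B_def)

lemma B_sink: "j \<in> B \<Longrightarrow> is_sink H j"
  by (simp add: B_def)

lemma \<xi>_bounds: "j \<in> {1..n} \<Longrightarrow> a j \<le> \<xi> j \<and> \<xi> j \<le> b j"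
  using \<xi>_in_Y Y_bounds by blast

lemma core_lo_le_hi: "j \<in> {1..n} \<Longrightarrow> core_lo j \<le> core_hi j"
  using a_le_b by (auto simp: core_lo_def core_hi_def)

lemma h_range_finite: "k \<in> {1..n} \<Longrightarrow> finite ((\<lambda>y. h y k) ` Y)"
proof -
  assume k: "k \<in> {1..n}"
  have "(\<lambda>y. h y k) ` Y \<subseteq> {a k..b k}" using h_bounds[OF _ k] by auto
  then show ?thesis by (rule finite_subset) simp
qed

lemma vmin_le_h_le_vmax:
  assumes "y \<in> Y" "k \<in> {1..n}"
  shows "vmin k \<le> h y k \<and> h y k \<le> vmax k"
proof -
  have "h y k \<in> (\<lambda>y. h y k) ` Y" using assms(1) by blast
  then show ?thesis using h_bounds[OF assms] h_range_finite[OF assms(2)] by (simp add: vmin_def vmax_def)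
qed

lemma vmin_le_vmax: "k \<in> {1..n} \<Longrightarrow> vmin k \<le> vmax k"
  using vmin_le_h_le_vmax[OF \<xi>_in_Y] by (meson order_trans)

lemma vmin_vmax_attained:
  assumes "k \<in> {1..n}" "k \<notin> A"
  shows "vmin k \<in> (\<lambda>y. h y k) ` Y \<and> vmax k \<in> (\<lambda>y. h y k) ` Y"
proof -
  have "(\<lambda>y. h y k) ` Y \<noteq> {}" using \<xi>_in_Y by blast
  then show ?thesis
    using h_range_finite[OF assms(1)] assms(2) Min_in Max_in by (simp add: vmin_def vmax_def)
qed

lemma vmin_vmax_bounds:
  assumes k: "k \<in> {1..n}"
  shows "a k \<le> vmin k \<and> vmax k \<le> b k"
proof (cases "k \<in> A")
  case False
  then obtain y1 y2 where "y1 \<in> Y" "vmin k = h y1 k" "y2 \<in> Y" "vmax k = h y2 k"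
    using vmin_vmax_attained[OF k] by blast
  then show ?thesis using h_bounds[OF _ k] by simp
qed (simp add: vmin_def vmax_def)

text \<open>Either \<open>k\<close> has an in-arc in \<open>H\<close>, so \<open>h\<^sub>k\<close> is not constant, or \<open>k \<in> A\<close>; then \<open>k\<close> is not
  isolated in \<open>H\<close>, so it has an out-arc in \<open>H\<close> and \<open>Y\<^sub>k\<close> has at least two values.\<close>
lemma vmin_less_vmax:
  assumes "(j, k, s) \<in> new_arcs"
  shows "vmin k < vmax k"
proof -
  have G: "(j, k, s) \<in> G" and k: "k \<in> {1..n}" using assms new_arc_G new_arc_range by auto
  show ?thesis
  proof (cases "k \<in> A")
    case True
    then have "is_source H k" by (simp add: A_def)
    moreover have "\<not> is_isolated H k" using no_arc_to_isolated G by blast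
    ultimately obtain k' s' where "(k, k', s') \<in> H"
      using outdeg_eq_0_iff[OF H_finite] by (auto simp: is_isolated_def is_sink_def)
    then obtain x where "x \<in> Y" "x k < b k" using H_iff by blast
    then have "a k < b k" using Y_bounds k by force
    then show ?thesis using True by (simp add: vmin_def vmax_def)
  next
    case False
    have "\<not> is_source G k" using G indeg_eq_0_iff[OF G_finite] by (auto simp: is_source_def)
    then have "\<not> is_source H k" using False k by (auto simp: A_def)
    then obtain l s' where ls: "(l, k, s') \<in> H"
      using indeg_eq_0_iff[OF H_finite] by (auto simp: is_source_def)
    then have l: "l \<in> {1..n}" using H_sub_G G_arc_range by blast
    from ls obtain x where x: "x \<in> Y" "x l < b l" "h (x(l := x l + 1)) k \<noteq> h x k"
      using H_iff[of l k s'] by (auto split: if_splits)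
    have "x(l := x l + 1) \<in> Y" using Y_update[OF x(1) l] Y_bounds[OF x(1) l] x(2) by auto
    then show ?thesis
      using vmin_le_h_le_vmax[OF x(1) k] vmin_le_h_le_vmax[OF _ k, of "x(l := x l + 1)"] x(3)
      by linarith
  qed
qed

lemma active_on_Y:
  assumes "x \<in> Y" "active x j k s"
  shows "j \<in> B \<and> x j \<noteq> \<xi> j"
proof -
  have j: "j \<in> {1..n}" using assms(2) new_arc_range by (auto simp: active_def)
  have "core_lo j \<le> x j \<and> x j \<le> core_hi j" if "j \<notin> B \<or> x j = \<xi> j"
    using that Y_bounds[OF assms(1) j] by (auto simp: core_lo_def core_hi_def)
  then show ?thesis using assms(2) by (auto simp: active_def split: if_splits)
qed

lemma clamp_on_Y: "x \<in> Y \<Longrightarrow> clamp x = x"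
  using Y_bounds Y_outside by (auto simp: clamp_def)

lemma F_eq_h:
  assumes "x \<in> Y" "\<And>j s. \<not> active x j k s"
  shows "F x k = h x k"
  using assms clamp_on_Y h_outside by (auto simp: F_def forced_min_def forced_max_def)

lemma F_eq_h_on_core: "x \<in> Y \<Longrightarrow> \<forall>i\<in>B. x i = \<xi> i \<Longrightarrow> F x = h x"
  using F_eq_h active_on_Y by blast

definition to_core :: "(nat \<Rightarrow> int) \<Rightarrow> nat \<Rightarrow> int" where
  "to_core y = (\<lambda>i. if i \<in> B then \<xi> i else y i)"

lemma reset_subset_of_B:
  assumes "finite C" "C \<subseteq> B" "y \<in> Y"
  shows "(\<lambda>i. if i \<in> C then \<xi> i else y i) \<in> Y \<and> h (\<lambda>i. if i \<in> C then \<xi> i else y i) = h y"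
  using assms(1,2)
proof (induction C rule: finite_induct)
  case (insert c C)
  let ?q = "\<lambda>i. if i \<in> C then \<xi> i else y i"
  have "(\<lambda>i. if i \<in> insert c C then \<xi> i else y i) = ?q(c := \<xi> c)" by auto
  moreover have "c \<in> {1..n}" "is_sink H c" using insert.prems B_range B_sink by auto
  ultimately show ?case
    using insert Y_update \<xi>_bounds h_sink_update by auto
qed (use assms in simp)

lemma to_core_in_Y_and_h:
  assumes "y \<in> Y"
  shows "to_core y \<in> Y \<and> h (to_core y) = h y"
proof -
  have "finite B" using B_range by (meson finite_atLeastAtMost finite_subset subsetI)
  from reset_subset_of_B[OF this _ assms] show ?thesis unfolding to_core_def by auto
qed

lemma to_core_in_Y: "y \<in> Y \<Longrightarrow> to_core y \<in> Y"
  using to_core_in_Y_and_h by blast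

lemma F_to_core: "y \<in> Y \<Longrightarrow> F (to_core y) = h y"
  using to_core_in_Y_and_h F_eq_h_on_core by (metis to_core_def)

lemma attached_above_Pos_Neg:
  assumes "(j, k, Pos) \<in> new_arcs" "(j, k, Neg) \<in> new_arcs"
  shows "attached_above j k Pos \<noteq> attached_above j k Neg"
proof (cases "j \<in> B")
  case False
  have j: "j \<in> {1..n}" and k: "k \<in> {1..n}" using assms new_arc_range by auto
  have flip: "\<exists>y'\<in>Y. y' j = w \<and> h y' k < vmax k"
    if "y \<in> Y" "y j = u" "h y k < vmax k" "a j \<le> w" "w \<le> b j" for y u w
  proof (intro bexI conjI)
    show "y(j := w) \<in> Y" using Y_update that j by blast
    have "h (y(j := w)) k = h (y(j := y j)) k"
      using h_no_arc_const[OF new_arc_not_H[OF assms(1)] new_arc_not_H[OF assms(2)] j k \<open>y \<in> Y\<close>]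
        that Y_bounds[OF \<open>y \<in> Y\<close> j] by blast
    then show "h (y(j := w)) k < vmax k" using that by (metis fun_upd_triv)
  qed simp
  have "(\<exists>y\<in>Y. y j = b j \<and> h y k < vmax k) \<longleftrightarrow> (\<exists>y\<in>Y. y j = a j \<and> h y k < vmax k)"
    using flip a_le_b j by blast
  then show ?thesis using False by (simp add: attached_above_def)
qed (use assms in \<open>auto simp: attached_above_def\<close>)

lemma attached_above_unique:
  assumes "(j, k, s1) \<in> new_arcs" "(j, k, s2) \<in> new_arcs"
    "attached_above j k s1 = attached_above j k s2"
  shows "s1 = s2"
  using attached_above_Pos_Neg[of j k] assms by (cases s1; cases s2) auto

subsection \<open>The state space \<open>X\<close>\<close>

lemma a'_le_b': "\<forall>j\<in>{1..n}. a' j \<le> b' j"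
  using core_lo_le_hi by (fastforce simp: a'_def b'_def)

lemma X_state_space: "state_space n X"
  unfolding state_space_def X_def using a'_le_b' by blast

lemma B_card_le_2:
  assumes "j \<in> B"
  shows "b j \<le> a j + 1"
proof -
  have j: "j \<in> {1..n}" using assms B_range by blast
  have "outdeg H j = 0" using B_sink[OF assms] by (simp add: is_sink_def)
  then have "card (comp Y j) \<le> 2" using Y_degree_bound[OF j] by (auto split: if_splits)
  then show ?thesis using card_comp_box[OF a_le_b j] Y_box by simp
qed

lemma B_covered:
  assumes "j \<in> B"
  shows "a' j \<le> a j \<and> b j \<le> b' j"
proof -
  have j: "j \<in> {1..n}" using assms B_range by blast
  have "\<not> is_sink G j" using assms by (simp add: B_def)
  then obtain k s where "(j, k, s) \<in> G" using outdeg_eq_0_iff[OF G_finite] by (auto simp: is_sink_def)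
  moreover have "(j, k, s) \<notin> H" using H_sink_no_arc[OF B_sink[OF assms]] .
  ultimately have new: "(j, k, s) \<in> new_arcs" by (simp add: new_arcs_def)
  have r: "a j \<le> \<xi> j" "\<xi> j \<le> b j" "b j \<le> a j + 1" using \<xi>_bounds[OF j] B_card_le_2[OF assms] by auto
  show ?thesis
  proof (cases "a j < \<xi> j")
    case True
    have "arcs_below j \<noteq> {}"
    proof (cases "\<exists>k'. (j, k', Neg) \<in> new_arcs")
      case True
      then obtain k' where "(j, k', Neg) \<in> new_arcs" by blast
      then have "(k', Neg) \<in> arcs_below j"
        using \<open>a j < \<xi> j\<close> assms by (auto simp: arcs_below_def attached_above_def)
      then show ?thesis by blast
    next
      case False
      then have "(k, Pos) \<in> arcs_below j"
        using \<open>a j < \<xi> j\<close> assms new by (cases s) (auto simp: arcs_below_def attached_above_def)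
      then show ?thesis by blast
    qed
    then show ?thesis using r True assms by (auto simp: a'_def b'_def core_lo_def core_hi_def)
  next
    case xi_eq_a: False
    have "arcs_above j \<noteq> {}"
    proof (cases "\<exists>k'. (j, k', Pos) \<in> new_arcs")
      case True
      then obtain k' where "(j, k', Pos) \<in> new_arcs" by blast
      then have "(k', Pos) \<in> arcs_above j"
        using xi_eq_a assms by (auto simp: arcs_above_def attached_above_def)
      then show ?thesis by blast
    next
      case False
      then have "(k, Neg) \<in> arcs_above j"
        using xi_eq_a assms new by (cases s) (auto simp: arcs_above_def attached_above_def)
      then show ?thesis by blast
    qed
    then show ?thesis using r xi_eq_a assms by (auto simp: a'_def b'_def core_lo_def core_hi_def)
  qed
qed

lemma Y_sub_X: "Y \<subseteq> X"
proof
  fix x assume x: "x \<in> Y"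
  have "a' i \<le> x i \<and> x i \<le> b' i" if i: "i \<in> {1..n}" for i
    using Y_bounds[OF x i] B_covered[of i]
    by (cases "i \<in> B") (auto simp: a'_def b'_def core_lo_def core_hi_def)
  then show "x \<in> X" using Y_outside[OF x] by (simp add: X_def box_def)
qed

lemma clamp_in_Y: "clamp x \<in> Y"
  unfolding Y_box clamp_def box_def using a_le_b by auto

lemma F_bounds: "k \<in> {1..n} \<Longrightarrow> vmin k \<le> F x k \<and> F x k \<le> vmax k"
  using vmin_le_vmax vmin_le_h_le_vmax[OF clamp_in_Y] by (auto simp: F_def)

lemma F_in_Y: "F x \<in> Y"
proof -
  have "a k \<le> F x k \<and> F x k \<le> b k" if k: "k \<in> {1..n}" for k
    using F_bounds[OF k, of x] vmin_vmax_bounds[OF k] by linarith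
  then have "F x \<in> box n a b" by (simp add: box_def F_def)
  then show ?thesis using Y_box by simp
qed

subsection \<open>The interaction graph of \<open>F\<close>\<close>

lemma active_step_on:
  assumes "active (x(j := x j + 1)) l k s" "\<not> active x l k s"
  shows "l = j \<and> attached_above l k s"
  using assms by (auto simp: active_def split: if_splits)

lemma active_step_off:
  assumes "active x l k s" "\<not> active (x(j := x j + 1)) l k s"
  shows "l = j \<and> \<not> attached_above l k s"
  using assms by (auto simp: active_def split: if_splits)

lemma clamp_update_outside: "j \<notin> {1..n} \<Longrightarrow> clamp (x(j := v)) = clamp x"
  by (auto simp: clamp_def fun_eq_iff)

lemma clamp_update:
  "j \<in> {1..n} \<Longrightarrow> clamp (x(j := v)) = (clamp x)(j := max (a j) (min (b j) v))"
  by (auto simp: clamp_def fun_eq_iff)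

lemma clamp_step_bounds:
  assumes "j \<in> {1..n}"
  shows "a j \<le> clamp x j" "clamp x j \<le> max (a j) (min (b j) (x j + 1))"
    "max (a j) (min (b j) (x j + 1)) \<le> b j"
  using assms a_le_b by (auto simp: clamp_def)

lemma h_clamp_step_antimono:
  assumes no_arc: "(j, k, Pos) \<notin> H" and k: "k \<in> {1..n}"
  shows "h (clamp (x(j := x j + 1))) k \<le> h (clamp x) k"
proof (cases "j \<in> {1..n}")
  case True
  show ?thesis
    using h_no_Pos_antimono[OF no_arc True k clamp_in_Y[of x] clamp_step_bounds[of j x, OF True]]
    by (simp add: clamp_update[OF True])
qed (simp add: clamp_update_outside)

lemma h_clamp_step_mono:
  assumes no_arc: "(j, k, Neg) \<notin> H" and k: "k \<in> {1..n}"
  shows "h (clamp x) k \<le> h (clamp (x(j := x j + 1))) k"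
proof (cases "j \<in> {1..n}")
  case True
  show ?thesis
    using h_no_Neg_mono[OF no_arc True k clamp_in_Y[of x] clamp_step_bounds[of j x, OF True]]
    by (simp add: clamp_update[OF True])
qed (simp add: clamp_update_outside)

text \<open>Raising \<open>x\<^sub>j\<close> switches on only arcs attached above \<open>j\<close> and switches off only arcs attached
  below; without a positive arc \<open>j \<rightarrow> k\<close> the former force \<open>vmin\<close> and the latter forced \<open>vmax\<close>.\<close>
lemma F_step_antimono:
  assumes no_arc: "(j, k, Pos) \<notin> G" and k: "k \<in> {1..n}"
  shows "F (x(j := x j + 1)) k \<le> F x k"
proof -
  let ?x' = "x(j := x j + 1)"
  have no_new: "\<not> active y j k Pos" for y using no_arc new_arc_G by (auto simp: active_def)
  have min: "forced_min ?x' k" if "forced_min x k"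
  proof -
    from that obtain l s where act: "active x l k s" "\<not> raises l k s" by (auto simp: forced_min_def)
    have "active ?x' l k s"
    proof (rule ccontr)
      assume "\<not> active ?x' l k s"
      then have "l = j" "\<not> attached_above l k s" using active_step_off[OF act(1)] by auto
      then show False using act no_new by (cases s) (auto simp: raises_def)
    qed
    then show ?thesis using act(2) by (auto simp: forced_min_def)
  qed
  have max: "forced_max x k" if "forced_max ?x' k"
  proof -
    from that obtain l s where act: "active ?x' l k s" "raises l k s" by (auto simp: forced_max_def)
    have "active x l k s"
    proof (rule ccontr)
      assume "\<not> active x l k s"
      then have "l = j" "attached_above l k s" using active_step_on[OF act(1)] by auto
      then show False using act no_new by (cases s) (auto simp: raises_def)
    qed
    then show ?thesis using act(2) by (auto simp: forced_max_def)
  qed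
  have "(j, k, Pos) \<notin> H" using no_arc H_sub_G by blast
  then have base: "h (clamp ?x') k \<le> h (clamp x) k" using h_clamp_step_antimono k by blast
  show ?thesis
    using forced_choice_mono[OF min max _ base, where lo = "vmin k" and hi = "vmax k"]
      vmin_le_h_le_vmax[OF clamp_in_Y k] k by (simp add: F_def)
qed

lemma F_step_mono:
  assumes no_arc: "(j, k, Neg) \<notin> G" and k: "k \<in> {1..n}"
  shows "F x k \<le> F (x(j := x j + 1)) k"
proof -
  let ?x' = "x(j := x j + 1)"
  have no_new: "\<not> active y j k Neg" for y using no_arc new_arc_G by (auto simp: active_def)
  have min: "forced_min x k" if "forced_min ?x' k"
  proof -
    from that obtain l s where act: "active ?x' l k s" "\<not> raises l k s" by (auto simp: forced_min_def)
    have "active x l k s"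
    proof (rule ccontr)
      assume "\<not> active x l k s"
      then have "l = j" "attached_above l k s" using active_step_on[OF act(1)] by auto
      then show False using act no_new by (cases s) (auto simp: raises_def)
    qed
    then show ?thesis using act(2) by (auto simp: forced_min_def)
  qed
  have max: "forced_max ?x' k" if "forced_max x k"
  proof -
    from that obtain l s where act: "active x l k s" "raises l k s" by (auto simp: forced_max_def)
    have "active ?x' l k s"
    proof (rule ccontr)
      assume "\<not> active ?x' l k s"
      then have "l = j" "\<not> attached_above l k s" using active_step_off[OF act(1)] by auto
      then show False using act no_new by (cases s) (auto simp: raises_def)
    qed
    then show ?thesis using act(2) by (auto simp: forced_max_def)
  qed
  have "(j, k, Neg) \<notin> H" using no_arc H_sub_G by blast
  then have base: "h (clamp x) k \<le> h (clamp ?x') k" using h_clamp_step_mono k by blast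
  show ?thesis
    using forced_choice_mono[OF min max _ base, where lo = "vmin k" and hi = "vmax k"]
      vmin_le_h_le_vmax[OF clamp_in_Y k] k by (simp add: F_def)
qed

lemma interaction_graph_F_sub: "interaction_graph n X F \<subseteq> G"
proof
  fix e assume "e \<in> interaction_graph n X F"
  then obtain j k s x where e: "e = (j, k, s)" "k \<in> {1..n}"
    "if s = Pos then F (x(j := x j + 1)) k - F x k > 0 else F (x(j := x j + 1)) k - F x k < 0"
    unfolding interaction_graph_def by blast
  show "e \<in> G"
  proof (cases s)
    case Pos
    then have "F x k < F (x(j := x j + 1)) k" using e(3) by simp
    then have "(j, k, Pos) \<in> G" using F_step_antimono e(2) by (meson not_le)
    then show ?thesis using e(1) Pos by simp
  next
    case Neg
    then have "F (x(j := x j + 1)) k < F x k" using e(3) by simp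
    then have "(j, k, Neg) \<in> G" using F_step_mono e(2) by (meson not_le)
    then show ?thesis using e(1) Neg by simp
  qed
qed

lemma F_arc_intro:
  assumes "j \<in> {1..n}" "k \<in> {1..n}" "x \<in> X" "x j < b' j"
    "if s = Pos then F x k < F (x(j := x j + 1)) k else F (x(j := x j + 1)) k < F x k"
  shows "(j, k, s) \<in> interaction_graph n X F"
  using interaction_graph_box_iff[OF a'_le_b', of j k s F] assms by (auto simp: X_def)

lemma to_core_step: "j \<notin> B \<Longrightarrow> to_core (y(j := y j + 1)) = (to_core y)(j := to_core y j + 1)"
  by (auto simp: to_core_def fun_eq_iff)

lemma to_core_inactive:
  assumes "y \<in> Y"
  shows "\<not> active (to_core y) j k s"
proof
  assume "active (to_core y) j k s"
  with active_on_Y[OF to_core_in_Y[OF assms]] have "j \<in> B" "to_core y j \<noteq> \<xi> j" by auto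
  then show False by (simp add: to_core_def)
qed

lemma H_arc_in_F_graph:
  assumes arc: "(j, k, s) \<in> H"
  shows "(j, k, s) \<in> interaction_graph n X F"
proof -
  obtain y where y: "y \<in> Y" "y j < b j"
    "if s = Pos then h y k < h (y(j := y j + 1)) k else h (y(j := y j + 1)) k < h y k"
    and j: "j \<in> {1..n}" and k: "k \<in> {1..n}"
    using arc H_iff by blast
  have jB: "j \<notin> B" using arc H_sink_no_arc B_sink by blast
  have "y(j := y j + 1) \<in> Y" using Y_update[OF y(1) j] Y_bounds[OF y(1) j] y(2) by auto
  then have "F ((to_core y)(j := to_core y j + 1)) = h (y(j := y j + 1))"
    using F_to_core to_core_step[OF jB] by metis
  moreover have "to_core y \<in> X" "to_core y j < b' j"
    using to_core_in_Y[OF y(1)] Y_sub_X y(2) jB by (auto simp: to_core_def b'_def core_hi_def)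
  ultimately show ?thesis
    using F_arc_intro[OF j k] F_to_core[OF y(1)] y(3) by simp
qed

text \<open>An arc attached above is witnessed by leaving the core interval upwards from a state of
  \<open>Y\<close> in which no other new arc is active; symmetrically for arcs attached below.\<close>
lemma new_arc_above_in_F_graph:
  assumes arc: "(j, k, s) \<in> new_arcs" and up: "attached_above j k s" and y: "y \<in> Y"
    and yj: "j \<notin> B \<Longrightarrow> y j = b j"
    and moves: "if s = Pos then h y k < vmax k else vmin k < h y k"
  shows "(j, k, s) \<in> interaction_graph n X F"
proof -
  have j: "j \<in> {1..n}" and k: "k \<in> {1..n}" using arc new_arc_range by auto
  define p where "p = to_core y"
  have p: "p \<in> Y" "F p k = h y k" "p j = core_hi j"
    using to_core_in_Y[OF y] F_to_core[OF y] yj by (auto simp: p_def to_core_def core_hi_def)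
  have "(k, s) \<in> arcs_above j" using arc up by (simp add: arcs_above_def)
  then have b'j: "b' j = core_hi j + 1" by (auto simp: b'_def)
  define x' where "x' = p(j := p j + 1)"
  have act: "active x' l k s' \<longleftrightarrow> l = j \<and> s' = s" for l s'
  proof (cases "l = j")
    case False
    then have "active x' l k s' \<longleftrightarrow> active p l k s'" by (simp add: active_def x'_def)
    then show ?thesis using to_core_inactive[OF y] False by (simp add: p_def)
  next
    case True
    have "active x' j k s' \<longleftrightarrow> (j, k, s') \<in> new_arcs \<and> attached_above j k s'"
      using core_lo_le_hi[OF j] p(3) by (auto simp: active_def x'_def)
    then show ?thesis using attached_above_unique[OF _ arc] arc up True by blast
  qed
  have "F x' k = (if s = Pos then vmax k else vmin k)"
    using act up k by (auto simp: F_def forced_min_def forced_max_def raises_def)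
  then show ?thesis
    using F_arc_intro[OF j k] p Y_sub_X b'j moves by (auto simp: x'_def)
qed

lemma new_arc_below_in_F_graph:
  assumes arc: "(j, k, s) \<in> new_arcs" and down: "\<not> attached_above j k s" and y: "y \<in> Y"
    and yj: "j \<notin> B \<Longrightarrow> y j = a j"
    and moves: "if s = Pos then vmin k < h y k else h y k < vmax k"
  shows "(j, k, s) \<in> interaction_graph n X F"
proof -
  have j: "j \<in> {1..n}" and k: "k \<in> {1..n}" using arc new_arc_range by auto
  define p where "p = to_core y"
  have p: "p \<in> Y" "F p k = h y k" "p j = core_lo j"
    using to_core_in_Y[OF y] F_to_core[OF y] yj by (auto simp: p_def to_core_def core_lo_def)
  have "(k, s) \<in> arcs_below j" using arc down by (simp add: arcs_below_def)
  then have a'j: "a' j = core_lo j - 1" by (auto simp: a'_def)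
  define x where "x = p(j := core_lo j - 1)"
  have "x \<in> X"
    using p(1) Y_sub_X a'j a'_le_b' core_lo_le_hi[OF j] j
    unfolding x_def X_def by (intro box_update) (auto simp: b'_def)
  moreover have "x j < b' j" "x(j := x j + 1) = p"
    using core_lo_le_hi[OF j] p(3) by (auto simp: x_def b'_def)
  moreover have act: "active x l k s' \<longleftrightarrow> l = j \<and> s' = s" for l s'
  proof (cases "l = j")
    case False
    then have "active x l k s' \<longleftrightarrow> active p l k s'" by (simp add: active_def x_def)
    then show ?thesis using to_core_inactive[OF y] False by (simp add: p_def)
  next
    case True
    have "active x j k s' \<longleftrightarrow> (j, k, s') \<in> new_arcs \<and> \<not> attached_above j k s'"
      using core_lo_le_hi[OF j] by (auto simp: active_def x_def)
    then show ?thesis using attached_above_unique[OF _ arc] arc down True by blast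
  qed
  then have "F x k = (if s = Pos then vmin k else vmax k)"
    using down k by (cases s) (auto simp: F_def forced_min_def forced_max_def raises_def)
  ultimately show ?thesis using F_arc_intro[OF j k] p(2) moves by auto
qed

lemma B_arc_target_not_A:
  assumes "(j, k, s) \<in> new_arcs" "j \<in> B"
  shows "k \<notin> A"
  using no_sink_source_arc new_arc_G[OF assms(1)] B_sink[OF assms(2)] by (fastforce simp: A_def)

lemma new_arc_above_witness:
  assumes arc: "(j, k, s) \<in> new_arcs" and up: "attached_above j k s"
  obtains y where "y \<in> Y" "j \<notin> B \<Longrightarrow> y j = b j"
    "if s = Pos then h y k < vmax k else vmin k < h y k"
proof (cases "j \<in> B")
  case True
  have k: "k \<in> {1..n}" using arc new_arc_range by blast
  obtain y1 y2 where y1: "y1 \<in> Y" "vmin k = h y1 k" and y2: "y2 \<in> Y" "vmax k = h y2 k"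
    using vmin_vmax_attained[OF k B_arc_target_not_A[OF arc True]] by blast
  show ?thesis
  proof (cases s)
    case Pos
    then show ?thesis using that[OF y1(1)] y1(2) vmin_less_vmax[OF arc] True by simp
  next
    case Neg
    then show ?thesis using that[OF y2(1)] y2(2) vmin_less_vmax[OF arc] True by simp
  qed
next
  case False
  have j: "j \<in> {1..n}" and k: "k \<in> {1..n}" using arc new_arc_range by auto
  show ?thesis
  proof (cases s)
    case Pos
    then show ?thesis using that up False by (auto simp: attached_above_def)
  next
    case Neg
    let ?ya = "\<xi>(j := a j)" and ?yb = "\<xi>(j := b j)"
    have Y: "?ya \<in> Y" "?yb \<in> Y" using Y_update[OF \<xi>_in_Y j] a_le_b j by auto
    have "vmax k \<le> h ?ya k" using up False Neg Y(1) by (auto simp: attached_above_def)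
    moreover have "h ?ya k \<le> h ?yb k"
      using h_no_Neg_mono[OF new_arc_not_H[OF arc[unfolded Neg]] j k \<xi>_in_Y] a_le_b j by simp
    ultimately have "vmin k < h ?yb k" using vmin_less_vmax[OF arc] by linarith
    then show ?thesis using that Y(2) Neg by simp
  qed
qed

lemma new_arc_below_witness:
  assumes arc: "(j, k, s) \<in> new_arcs" and down: "\<not> attached_above j k s"
  obtains y where "y \<in> Y" "j \<notin> B \<Longrightarrow> y j = a j"
    "if s = Pos then vmin k < h y k else h y k < vmax k"
proof (cases "j \<in> B")
  case True
  have k: "k \<in> {1..n}" using arc new_arc_range by blast
  obtain y1 y2 where y1: "y1 \<in> Y" "vmin k = h y1 k" and y2: "y2 \<in> Y" "vmax k = h y2 k"
    using vmin_vmax_attained[OF k B_arc_target_not_A[OF arc True]] by blast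
  show ?thesis
  proof (cases s)
    case Pos
    then show ?thesis using that[OF y2(1)] y2(2) vmin_less_vmax[OF arc] True by simp
  next
    case Neg
    then show ?thesis using that[OF y1(1)] y1(2) vmin_less_vmax[OF arc] True by simp
  qed
next
  case False
  have j: "j \<in> {1..n}" and k: "k \<in> {1..n}" using arc new_arc_range by auto
  show ?thesis
  proof (cases s)
    case Neg
    then show ?thesis using that down False by (auto simp: attached_above_def)
  next
    case Pos
    let ?ya = "\<xi>(j := a j)" and ?yb = "\<xi>(j := b j)"
    have Y: "?ya \<in> Y" "?yb \<in> Y" using Y_update[OF \<xi>_in_Y j] a_le_b j by auto
    have "vmax k \<le> h ?yb k" using down False Pos Y(2) by (auto simp: attached_above_def)
    moreover have "h ?yb k \<le> h ?ya k"
      using h_no_Pos_antimono[OF new_arc_not_H[OF arc[unfolded Pos]] j k \<xi>_in_Y] a_le_b j by simp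
    ultimately have "vmin k < h ?ya k" using vmin_less_vmax[OF arc] by linarith
    then show ?thesis using that Y(1) Pos by simp
  qed
qed

lemma G_sub_interaction_graph_F: "G \<subseteq> interaction_graph n X F"
proof safe
  fix j k s assume arc: "(j, k, s) \<in> G"
  show "(j, k, s) \<in> interaction_graph n X F"
  proof (cases "(j, k, s) \<in> H")
    case False
    then have new: "(j, k, s) \<in> new_arcs" using arc by (simp add: new_arcs_def)
    show ?thesis
    proof (cases "attached_above j k s")
      case True
      then show ?thesis
        using new_arc_above_witness[OF new True] new_arc_above_in_F_graph[OF new True] by metis
    next
      case False
      then show ?thesis
        using new_arc_below_witness[OF new False] new_arc_below_in_F_graph[OF new False] by metis
    qed
  qed (rule H_arc_in_F_graph)
qed

lemma interaction_graph_F: "interaction_graph n X F = G"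
  using interaction_graph_F_sub G_sub_interaction_graph_F by blast

subsection \<open>Degree bound\<close>

lemma out_arcs_G_split:
  "{(k, s). (i, k, s) \<in> G} = {(k, s). (i, k, s) \<in> H} \<union> arcs_above i \<union> arcs_below i"
  using H_sub_G by (auto simp: arcs_above_def arcs_below_def new_arcs_def)

lemma outdeg_G_eq: "outdeg G i = outdeg H i + card (arcs_above i) + card (arcs_below i)"
proof -
  have fin: "finite {(k, s). (i, k, s) \<in> H}" "finite (arcs_above i)" "finite (arcs_below i)"
    using finite_out_arcs[OF G_finite, of i] finite_out_arcs[OF H_finite, of i]
    unfolding out_arcs_G_split by auto
  have "card ({(k, s). (i, k, s) \<in> H} \<union> arcs_above i \<union> arcs_below i)
      = card {(k, s). (i, k, s) \<in> H} + card (arcs_above i) + card (arcs_below i)"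
    using fin by (subst card_Un_disjoint; auto simp: arcs_above_def arcs_below_def new_arcs_def
        intro!: card_Un_disjoint)+
  then show ?thesis unfolding outdeg_def out_arcs_G_split .
qed

lemma card_comp_X:
  assumes "i \<in> {1..n}"
  shows "card (comp X i) = nat (core_hi i - core_lo i + 1)
    + (if arcs_above i = {} then 0 else 1) + (if arcs_below i = {} then 0 else 1)"
proof -
  have "card (comp X i) = nat (b' i - a' i + 1)" using card_comp_box[OF a'_le_b' assms] by (simp add: X_def)
  then show ?thesis using core_lo_le_hi[OF assms] by (simp add: a'_def b'_def split: if_splits)
qed

lemma Y_card_le_outdeg_H:
  assumes i: "i \<in> {1..n}" and "i \<notin> B" and not_sink_target: "\<not> (outdeg G i = 0 \<and> 0 < indeg G i)"
  shows "card (comp Y i) \<le> outdeg H i + 1"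
proof -
  have H_not_sink_target: "\<not> (outdeg H i = 0 \<and> 0 < indeg H i)"
  proof
    assume H_sink_target: "outdeg H i = 0 \<and> 0 < indeg H i"
    then have "outdeg G i = 0" using assms by (simp add: B_def is_sink_def)
    moreover obtain j s where "(j, i, s) \<in> H"
      using H_sink_target indeg_eq_0_iff[OF H_finite] by (metis gr_implies_not0)
    then have "0 < indeg G i" using indeg_eq_0_iff[OF G_finite] H_sub_G by blast
    ultimately show False using not_sink_target by blast
  qed
  then show ?thesis using Y_degree_bound[OF i] by (simp only: H_not_sink_target if_False)
qed

lemma X_degree_bound:
  assumes i: "i \<in> {1..n}"
  shows "if outdeg G i = 0 \<and> 0 < indeg G i then card (comp X i) = 2
    else card (comp X i) \<le> outdeg G i + 1"
proof -
  have fin: "finite (arcs_above i)" "finite (arcs_below i)"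
    using finite_out_arcs[OF G_finite, of i] unfolding out_arcs_G_split by auto
  note X_card = card_comp_X[OF i] and G_deg = outdeg_G_eq[of i]
    and up = indicator_le_card[OF fin(1)] and down = indicator_le_card[OF fin(2)]
  show ?thesis
  proof (cases "outdeg G i = 0 \<and> 0 < indeg G i")
    case True
    then have empty: "arcs_above i = {}" "arcs_below i = {}" and "outdeg H i = 0"
      using G_deg fin by auto
    have iB: "i \<notin> B" using True by (simp add: B_def is_sink_def)
    obtain j s where "(j, i, s) \<in> G" using True indeg_eq_0_iff[OF G_finite] by (metis gr_implies_not0)
    then have "\<not> is_isolated H i" using no_arc_to_isolated by blast
    then have "0 < indeg H i" using \<open>outdeg H i = 0\<close> by (simp add: is_isolated_def is_source_def is_sink_def)
    then have "card (comp Y i) = 2" using Y_degree_bound[OF i] \<open>outdeg H i = 0\<close> by simp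
    then show ?thesis
      using True X_card empty iB card_comp_box[OF a_le_b i]
      by (simp add: Y_box core_lo_def core_hi_def)
  next
    case False
    show ?thesis
    proof (cases "i \<in> B")
      case True
      then have "outdeg H i = 0" using B_sink by (simp add: is_sink_def)
      then show ?thesis using False True X_card G_deg up down by (simp add: core_lo_def core_hi_def)
    next
      case iB: False
      have "card (comp X i) = card (comp Y i)
          + (if arcs_above i = {} then 0 else 1) + (if arcs_below i = {} then 0 else 1)"
        using X_card iB card_comp_box[OF a_le_b i] by (simp add: Y_box core_lo_def core_hi_def)
      then show ?thesis using False Y_card_le_outdeg_H[OF i iB False] G_deg up down by simp
    qed
  qed
qed

lemma F_degree_bounded: "degree_bounded n X F"
  unfolding degree_bounded_def Let_def interaction_graph_F using X_degree_bound by blast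

lemma F_in_h_range: "i \<in> {1..n} \<Longrightarrow> i \<notin> A \<Longrightarrow> F x i \<in> (\<lambda>y. h y i) ` Y"
  using vmin_vmax_attained clamp_in_Y by (auto simp: F_def)

lemma F_eq_h_off_B_neighbours:
  assumes "x \<in> Y" "in_nbrs G i \<inter> B = {}"
  shows "F x i = h x i"
proof (rule F_eq_h[OF assms(1)])
  fix j s
  show "\<not> active x j i s"
  proof
    assume act: "active x j i s"
    then have "j \<in> in_nbrs G i" using new_arc_G by (auto simp: active_def in_nbrs_def)
    then show False using active_on_Y[OF assms(1) act] assms(2) by blast
  qed
qed

end

theorem lemma9:
  fixes n :: nat and G H :: sdigraph
    and Y :: "(nat \<Rightarrow> int) set" and h :: "(nat \<Rightarrow> int) \<Rightarrow> (nat \<Rightarrow> int)"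
    and \<xi> :: "nat \<Rightarrow> int"
  assumes "is_sdigraph n G"
    and "H \<subseteq> G"
    and "\<forall>(j, i, s)\<in>G. \<not> (is_sink H j \<and> is_source H i)"
    and "\<forall>(j, i, s)\<in>G. \<not> is_isolated H i"
    and "A = {i\<in>{1..n}. is_source H i \<and> \<not> is_source G i}"
    and "B = {i\<in>{1..n}. is_sink H i \<and> \<not> is_sink G i}"
    and "fds_on n Y h H"
    and "degree_bounded n Y h"
    and "\<xi> \<in> Y"
  shows "\<exists>X f. fds_on n X f G \<and> degree_bounded n X f \<and> Y \<subseteq> X
     \<and> f ` X \<subseteq> Y
     \<and> (\<forall>i\<in>{1..n} - A. (\<lambda>x. f x i) ` X \<subseteq> (\<lambda>y. h y i) ` Y)
     \<and> (\<forall>x\<in>Y. (\<forall>i\<in>B. x i = \<xi> i) \<longrightarrow> f x = h x)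
     \<and> (\<forall>x\<in>Y. \<forall>i\<in>{1..n}. in_nbrs G i \<inter> B = {} \<longrightarrow> f x i = h x i)"
proof -
  from assms(7) obtain a b where "\<forall>i\<in>{1..n}. a i \<le> b i" "Y = box n a b"
    "\<forall>x\<in>Y. h x \<in> Y" "interaction_graph n Y h = H"
    unfolding fds_on_def state_space_def by blast
  then interpret E: fds_extension n G H Y h \<xi> a b
    using assms(1-4,8,9) by unfold_locales auto
  have A: "A = E.A" and B: "B = E.B" using assms(5,6) by (simp_all add: E.A_def E.B_def)
  show ?thesis
  proof (intro exI conjI)
    show "fds_on n E.X E.F G"
      unfolding fds_on_def using E.X_state_space E.F_in_Y E.Y_sub_X E.interaction_graph_F by blast
    show "E.F ` E.X \<subseteq> Y" using E.F_in_Y by blast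
  qed (use E.F_degree_bounded E.Y_sub_X E.F_in_h_range E.F_eq_h_on_core E.F_eq_h_off_B_neighbours A B
      in auto)
qed

end
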